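(* Let $\mathcal{D}$ be the dumbbell: the non-uniform hypergraph on two vertices $u,v$ with edge set $\{\{u,v\},\{u\},\{v\}\}$. Then for every positive integer $k$, $\mathcal{E}_{\mathcal{D}}(k)=\bigl\lfloor\tfrac{3}{2}(k-1)\bigr\rfloor$, whereas $\mathcal{E}^*_{\mathcal{D}}(k)=(\phi-o(1))k$ as $k\to\infty$, where $\phi=\frac{1+\sqrt5}{2}$ is the golden ratio.
   Context: A (non-uniform) hypergraph has edges which are nonempty subsets of its vertex set of possibly different sizes; edges of size 1 are called loops. A multi-hypergraph may additionally have repeated (parallel) edges; a simple one has no repeated edges (but may contain edges $e\subsetneq f$). A copy of $H$ in $G$ is a sub(multi)hypergraph of $G$ isomorphic to $H$ (preserving edge sizes). $\operatorname{ex}(G,H)$ is the maximum number of edges in a sub(multi)hypergraph of $G$ (a sub-multiset of its edges) containing no copy of $H$. $\mathcal{E}_H(k):=\sup\{e(G): G \text{ a simple hypergraph with } \operatorname{ex}(G,H)<k\}$ and $\mathcal{E}^*_H(k):=\sup\{e(G): G\text{ a multi-hypergraph with }\operatorname{ex}(G,H)<k\}$, where $e(G)$ counts edges with multiplicity. Hypergraphs have no isolated vertices. *)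

theory Defs
  imports "HOL-Analysis.Analysis" "HOL-Library.Multiset" "HOL-Library.Extended_Nat"
begin

text \<open>A (finite) multi-hypergraph is a finite multiset of edges; each edge is a nonempty
finite set of vertices. Vertices are those covered by edges (no isolated vertices).\<close>

definition is_mhg :: "'a set multiset \<Rightarrow> bool" where
  "is_mhg G \<longleftrightarrow> (\<forall>e\<in>#G. e \<noteq> {} \<and> finite e)"

definition is_simple :: "'a set multiset \<Rightarrow> bool" where
  "is_simple G \<longleftrightarrow> (\<forall>e. count G e \<le> 1)"

definition hverts :: "'a set multiset \<Rightarrow> 'a set" where
  "hverts H = \<Union> (set_mset H)"

text \<open>G contains a copy of H: an injective vertex map sending the edge multiset of H
into a sub-multiset of G (edge sizes are preserved by injectivity).\<close>
definition has_copy :: "'a set multiset \<Rightarrow> 'b set multiset \<Rightarrow> bool" where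
  "has_copy G H \<longleftrightarrow> (\<exists>f. inj_on f (hverts H) \<and> image_mset (\<lambda>e. f ` e) H \<subseteq># G)"

definition ex :: "'a set multiset \<Rightarrow> 'b set multiset \<Rightarrow> nat" where
  "ex G H = Max (size ` {F. F \<subseteq># G \<and> \<not> has_copy F H})"

text \<open>Host hypergraphs live on vertex type nat (every finite hypergraph embeds there).
The supremum is taken in enat, so an unbounded set gives \<infinity>.\<close>
definition EH :: "'b set multiset \<Rightarrow> nat \<Rightarrow> enat" where
  "EH H k = Sup ((\<lambda>G. enat (size G)) ` {G :: nat set multiset. is_mhg G \<and> is_simple G \<and> ex G H < k})"

definition EHstar :: "'b set multiset \<Rightarrow> nat \<Rightarrow> enat" where
  "EHstar H k = Sup ((\<lambda>G. enat (size G)) ` {G :: nat set multiset. is_mhg G \<and> ex G H < k})"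

definition dumbbell :: "nat set multiset" where
  "dumbbell = {#{0,1}, {0}, {1}#}"

end

(*
  For a vertex set S, discarding the loops outside S and the 2-edges inside S leaves a
  dumbbell-free part of G, and every dumbbell-free submultiset lies in the part for its own
  set of loops; so ex(G, D) is the largest such part.

  For simple G an induction over the loop vertices finds an S that discards at most a third of
  the loops and 2-edges, whence e(G) <= 3/2 ex(G, D); disjoint dumbbells plus at most one loop
  attain this.

  For multi-hypergraphs take S random, each vertex in S with probability 1/phi: a loop is then
  discarded with probability 1 - 1/phi and a 2-edge with probability 1/phi^2, both equal to
  1/phi^2, whence e(G) <= phi ex(G, D). Conversely, copies of the complete graph on
  floor(phi j) vertices with j loops at every vertex have edge-to-ex ratio phi - O(1/j).
*)

theory Submission
  imports Defs
begin

lemma size_eq_card_set_mset_if_simple: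
  assumes "is_simple G"
  shows "size G = card (set_mset G)"
proof -
  have "count G e = 1" if "e \<in># G" for e
  proof -
    have "count G e \<le> 1"
      using assms by (simp add: is_simple_def)
    moreover have "0 < count G e"
      using that by simp
    ultimately show ?thesis
      by linarith
  qed
  then have "size G = (\<Sum>e\<in>set_mset G. 1)"
    unfolding size_multiset_overloaded_eq by (intro sum.cong) auto
  then show ?thesis
    by simp
qed

lemma is_simple_filter_mset: "is_simple G \<Longrightarrow> is_simple (filter_mset P G)"
  by (auto simp: is_simple_def)

lemma card_set_mset_le_size: "card (set_mset G) \<le> size G"
  using size_mset_mono[OF mset_set_set_mset_msubset[of G]] by simp

lemma size_filter_mset_disjoint_le:
  assumes "\<And>e. \<not> (P e \<and> Q e)"
  shows "size (filter_mset P G) + size (filter_mset Q G) \<le> size G"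
proof (induction G)
  case empty
  then show ?case
    by simp
next
  case (add x G)
  then show ?case
    using assms[of x] by auto
qed

lemma count_three_distinct_le:
  "a \<noteq> b \<Longrightarrow> a \<noteq> c \<Longrightarrow> b \<noteq> c \<Longrightarrow> count {#a, b, c#} x \<le> 1"
  by auto

lemma in_repeat_msetD: "x \<in># repeat_mset c A \<Longrightarrow> x \<in># A"
  by (metis count_greater_zero_iff count_repeat_mset mult_eq_0_iff neq0_conv)

lemma filter_mset_repeat_mset: "filter_mset P (repeat_mset c A) = repeat_mset c (filter_mset P A)"
  by (induction c) auto

lemma is_mhg_repeat_mset: "is_mhg G \<Longrightarrow> is_mhg (repeat_mset c G)"
  by (auto simp: is_mhg_def dest: in_repeat_msetD)

lemma finite_sizes_submultisets: "finite (size ` {F. F \<subseteq># G \<and> P F})"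
  by (rule finite_subset[of _ "{..size G}"]) (auto intro: size_mset_mono)

lemma size_le_ex:
  assumes "F \<subseteq># G" "\<not> has_copy F H"
  shows "size F \<le> ex G H"
  unfolding ex_def using assms by (intro Max_ge[OF finite_sizes_submultisets]) auto

text \<open>The hypothesis rules out \<open>H = {#}\<close>, for which the set maximised in \<^const>\<open>ex\<close> is
  empty and \<^const>\<open>ex\<close> is unspecified.\<close>
lemma ex_attained:
  fixes G :: "'a set multiset"
  assumes "\<not> has_copy ({#} :: 'a set multiset) H"
  obtains F where "F \<subseteq># G" "\<not> has_copy F H" "size F = ex G H"
proof -
  have "size ({#} :: 'a set multiset) \<in> size ` {F. F \<subseteq># G \<and> \<not> has_copy F H}"
    using assms by (intro imageI) simp
  then have "size ` {F. F \<subseteq># G \<and> \<not> has_copy F H} \<noteq> {}"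
    by blast
  then have "ex G H \<in> size ` {F. F \<subseteq># G \<and> \<not> has_copy F H}"
    unfolding ex_def by (rule Max_in[OF finite_sizes_submultisets])
  then obtain F where "F \<subseteq># G" "\<not> has_copy F H" "ex G H = size F"
    by auto
  with that show ?thesis
    by simp
qed

lemma has_copy_mono: "has_copy F H \<Longrightarrow> F \<subseteq># F' \<Longrightarrow> has_copy F' H"
  unfolding has_copy_def using subset_mset.order_trans by blast

lemma ex_less_size:
  fixes G :: "'a set multiset"
  assumes "\<not> has_copy ({#} :: 'a set multiset) H" "has_copy G H"
  shows "ex G H < size G"
proof -
  obtain F where F: "F \<subseteq># G" "\<not> has_copy F H" "size F = ex G H"
    by (rule ex_attained[of H G, OF assms(1)])
  with assms(2) have "F \<subset># G"
    by (metis subset_mset.le_imp_less_or_eq)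
  then show ?thesis
    using F(3) mset_subset_size by metis
qed

lemma ex_empty:
  assumes "\<not> has_copy ({#} :: 'a set multiset) H"
  shows "ex ({#} :: 'a set multiset) H = 0"
  using assms by (simp add: ex_def)

lemma ex_add_le:
  fixes A B :: "'a set multiset"
  assumes "\<not> has_copy ({#} :: 'a set multiset) H"
  shows "ex (A + B) H \<le> ex A H + ex B H"
proof -
  obtain F where F: "F \<subseteq># A + B" "\<not> has_copy F H" "size F = ex (A + B) H"
    by (rule ex_attained[of H "A + B", OF assms])
  define F1 where "F1 = F \<inter># A"
  have "F1 \<subseteq># A" "F - F1 \<subseteq># B"
    using F(1) by (simp_all add: F1_def subset_eq_diff_conv add.commute)
  moreover have F1F: "F1 \<subseteq># F" "F - F1 \<subseteq># F"
    by (simp_all add: F1_def)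
  then have "\<not> has_copy F1 H" "\<not> has_copy (F - F1) H"
    using F(2) has_copy_mono by metis+
  ultimately have "size F1 \<le> ex A H" "size (F - F1) \<le> ex B H"
    by (simp_all add: size_le_ex)
  moreover have "size F = size F1 + size (F - F1)"
    using size_Diff_submset[OF F1F(1)] size_mset_mono[OF F1F(1)] by simp
  ultimately show ?thesis
    using F(3) by simp
qed

lemma ex_repeat_le:
  fixes A :: "'a set multiset"
  assumes "\<not> has_copy ({#} :: 'a set multiset) H"
  shows "ex (repeat_mset c A) H \<le> c * ex A H"
proof (induction c)
  case 0
  then show ?case
    using ex_empty[OF assms] by simp
next
  case (Suc c)
  then show ?case
    using ex_add_le[OF assms, of A "repeat_mset c A"] by simp
qed

section \<open>Dumbbell-free parts\<close>

definition discarded :: "'a set \<Rightarrow> 'a set \<Rightarrow> bool" where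
  "discarded S e \<longleftrightarrow> (card e = 1 \<and> \<not> e \<subseteq> S) \<or> (card e = 2 \<and> e \<subseteq> S)"

definition dumbbell_free_part :: "'a set \<Rightarrow> 'a set multiset \<Rightarrow> 'a set multiset" where
  "dumbbell_free_part S G = filter_mset (\<lambda>e. \<not> discarded S e) G"

lemma discarded_singleton [simp]: "discarded S {v} \<longleftrightarrow> v \<notin> S"
  by (simp add: discarded_def)

lemma discarded_doubleton [simp]: "u \<noteq> v \<Longrightarrow> discarded S {u,v} \<longleftrightarrow> u \<in> S \<and> v \<in> S"
  by (simp add: discarded_def)

lemma discarded_cases:
  assumes "discarded S e"
  obtains v where "e = {v}" "v \<notin> S" | u v where "u \<noteq> v" "e = {u,v}" "u \<in> S" "v \<in> S"
  using assms unfolding discarded_def by (auto simp: card_Suc_eq numeral_2_eq_2)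

lemma has_copy_dumbbell_iff:
  "has_copy F dumbbell \<longleftrightarrow> (\<exists>u v. u \<noteq> v \<and> {u,v} \<in># F \<and> {u} \<in># F \<and> {v} \<in># F)"
proof
  assume "has_copy F dumbbell"
  then obtain f where f: "inj_on f (hverts dumbbell)" "image_mset (\<lambda>e. f ` e) dumbbell \<subseteq># F"
    unfolding has_copy_def by blast
  have "hverts dumbbell = {0,1}"
    by (auto simp: hverts_def dumbbell_def)
  with f(1) have "f 0 \<noteq> f 1"
    by (auto dest: inj_onD)
  moreover have "image_mset (\<lambda>e. f ` e) dumbbell = {#{f 0, f 1}, {f 0}, {f 1}#}"
    by (simp add: dumbbell_def)
  with f(2) have sub: "{#{f 0, f 1}, {f 0}, {f 1}#} \<subseteq># F"
    by simp
  have "{f 0, f 1} \<in># F" "{f 0} \<in># F" "{f 1} \<in># F"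
    by (rule mset_subset_eqD[OF sub], simp)+
  ultimately show "\<exists>u v. u \<noteq> v \<and> {u,v} \<in># F \<and> {u} \<in># F \<and> {v} \<in># F"
    by blast
next
  assume "\<exists>u v. u \<noteq> v \<and> {u,v} \<in># F \<and> {u} \<in># F \<and> {v} \<in># F"
  then obtain u v where uv: "u \<noteq> v" "{u,v} \<in># F" "{u} \<in># F" "{v} \<in># F"
    by blast
  define f where "f = (\<lambda>x::nat. if x = 0 then u else v)"
  have "inj_on f (hverts dumbbell)"
    using uv(1) by (auto simp: f_def inj_on_def hverts_def dumbbell_def)
  moreover have "image_mset (\<lambda>e. f ` e) dumbbell = {#{u,v}, {u}, {v}#}"
    by (simp add: dumbbell_def f_def insert_commute)
  moreover have "{#{u,v}, {u}, {v}#} \<subseteq># F"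
    using uv by (auto simp: subseteq_mset_def)
  ultimately show "has_copy F dumbbell"
    unfolding has_copy_def by (intro exI[of _ f]) simp
qed

lemma no_dumbbell_in_empty: "\<not> has_copy {#} dumbbell"
  by (simp add: has_copy_dumbbell_iff)

lemma dumbbell_free_part_free: "\<not> has_copy (dumbbell_free_part S G) dumbbell"
proof
  assume "has_copy (dumbbell_free_part S G) dumbbell"
  then obtain u v where "u \<noteq> v" "\<not> discarded S {u,v}" "\<not> discarded S {u}" "\<not> discarded S {v}"
    unfolding has_copy_dumbbell_iff dumbbell_free_part_def by auto
  then show False
    by simp
qed

lemma size_dumbbell_free_part_add:
  "size G = size (dumbbell_free_part S G) + size (filter_mset (discarded S) G)"
  using size_union[of "filter_mset (discarded S) G" "dumbbell_free_part S G"]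
    multiset_partition[of G "discarded S"]
  unfolding dumbbell_free_part_def by simp

lemma size_dumbbell_free_part_le_ex: "size (dumbbell_free_part S G) \<le> ex G dumbbell"
  by (rule size_le_ex[OF _ dumbbell_free_part_free]) (simp add: dumbbell_free_part_def)

lemma ex_dumbbell_le:
  fixes G :: "'a set multiset"
  assumes "\<And>S. size (dumbbell_free_part S G) \<le> B"
  shows "ex G dumbbell \<le> B"
proof -
  obtain F where F: "F \<subseteq># G" "\<not> has_copy F dumbbell" "size F = ex G dumbbell"
    by (rule ex_attained[OF no_dumbbell_in_empty])
  define S where "S = {v. {v} \<in># F}"
  have "\<not> discarded S e" if "e \<in># F" for e
  proof
    assume "discarded S e"
    then show False
      using that F(2) by (cases rule: discarded_cases) (auto simp: S_def has_copy_dumbbell_iff)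
  qed
  then have "filter_mset (\<lambda>e. \<not> discarded S e) F = F"
    by (simp add: filter_mset_eq_conv)
  then have "F \<subseteq># dumbbell_free_part S G"
    unfolding dumbbell_free_part_def using multiset_filter_mono[OF F(1)] by metis
  then have "size F \<le> size (dumbbell_free_part S G)"
    by (rule size_mset_mono)
  then show ?thesis
    using F(3) assms[of S] by simp
qed

lemma ex_dumbbell_le_size: "ex G dumbbell \<le> size G"
  by (rule ex_dumbbell_le) (simp add: dumbbell_free_part_def)

section \<open>Simple hypergraphs\<close>

text \<open>\<open>W\<close> stands for the vertices carrying a loop and \<open>E\<close> for the 2-edges of a simple
  hypergraph; this counts its edges that the dumbbell-free part for \<open>S\<close> discards.\<close>
definition discarded_count :: "'a set \<Rightarrow> 'a set set \<Rightarrow> 'a set \<Rightarrow> nat" where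
  "discarded_count W E S = card (W - S) + card {e\<in>E. e \<subseteq> S}"

lemma discarded_count_isolated_vertex:
  assumes "finite W" "finite E" "v \<in> W" "\<forall>e\<in>E. v \<notin> e"
    and "3 * discarded_count (W - {v}) E S \<le> card (W - {v}) + card E"
  shows "3 * discarded_count W E (insert v S) \<le> card W + card E"
proof -
  have "W - insert v S = W - {v} - S"
    by blast
  moreover have "{e\<in>E. e \<subseteq> insert v S} \<subseteq> {e\<in>E. e \<subseteq> S}"
    using assms(4) by auto
  ultimately have "discarded_count W E (insert v S) \<le> discarded_count (W - {v}) E S"
    unfolding discarded_count_def using assms(2) by (simp add: card_mono)
  moreover have "card W = card (W - {v}) + 1"
    using card.remove[OF assms(1,3)] by simp
  ultimately show ?thesis
    using assms(5) by linarith
qed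

lemma discarded_count_high_degree_vertex:
  assumes "finite W" "finite E" "v \<in> W" "2 \<le> card {e\<in>E. v \<in> e}"
    and "3 * discarded_count (W - {v}) {e\<in>E. v \<notin> e} S \<le> card (W - {v}) + card {e\<in>E. v \<notin> e}"
  shows "3 * discarded_count W E (S - {v}) \<le> card W + card E"
proof -
  have "card (W - (S - {v})) \<le> card (insert v (W - {v} - S))"
    using assms(1) by (intro card_mono) auto
  also have "\<dots> \<le> card (W - {v} - S) + 1"
    using assms(1) by (simp add: card_insert_if)
  finally have "card (W - (S - {v})) \<le> card (W - {v} - S) + 1" .
  moreover have "{e\<in>E. e \<subseteq> S - {v}} \<subseteq> {e\<in>{e\<in>E. v \<notin> e}. e \<subseteq> S}"
    by auto
  then have "card {e\<in>E. e \<subseteq> S - {v}} \<le> card {e\<in>{e\<in>E. v \<notin> e}. e \<subseteq> S}"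
    using assms(2) by (intro card_mono) auto
  ultimately have "discarded_count W E (S - {v}) \<le> discarded_count (W - {v}) {e\<in>E. v \<notin> e} S + 1"
    unfolding discarded_count_def by linarith
  moreover have "card E = card {e\<in>E. v \<notin> e} + card {e\<in>E. v \<in> e}"
    using assms(2) card_Un_disjoint[of "{e\<in>E. v \<notin> e}" "{e\<in>E. v \<in> e}"]
    by (simp add: Un_def Int_def conj_disj_distribL[symmetric])
  moreover have "card W = card (W - {v}) + 1"
    using card.remove[OF assms(1,3)] by simp
  ultimately show ?thesis
    using assms(4,5) by linarith
qed

lemma discarded_count_pendant_vertex:
  assumes "finite W" "finite E" "v \<in> W" "u \<noteq> v" "{e\<in>E. v \<in> e} = {{v,u}}"
    and "3 * discarded_count (W - {v,u}) {e\<in>E. v \<notin> e \<and> u \<notin> e} S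
           \<le> card (W - {v,u}) + card {e\<in>E. v \<notin> e \<and> u \<notin> e}"
  shows "3 * discarded_count W E (insert v (S - {u})) \<le> card W + card E"
proof -
  have "card (W - insert v (S - {u})) \<le> card ((W - {v,u} - S) \<union> (W \<inter> {u}))"
    using assms(1) by (intro card_mono) auto
  also have "\<dots> \<le> card (W - {v,u} - S) + card (W \<inter> {u})"
    by (rule card_Un_le)
  finally have "card (W - insert v (S - {u})) \<le> card (W - {v,u} - S) + card (W \<inter> {u})" .
  moreover have "{e\<in>E. e \<subseteq> insert v (S - {u})} \<subseteq> {e\<in>{e\<in>E. v \<notin> e \<and> u \<notin> e}. e \<subseteq> S}"
    using assms(4,5) by auto
  then have "card {e\<in>E. e \<subseteq> insert v (S - {u})} \<le> card {e\<in>{e\<in>E. v \<notin> e \<and> u \<notin> e}. e \<subseteq> S}"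
    using assms(2) by (intro card_mono) auto
  ultimately have "discarded_count W E (insert v (S - {u}))
      \<le> discarded_count (W - {v,u}) {e\<in>E. v \<notin> e \<and> u \<notin> e} S + card (W \<inter> {u})"
    unfolding discarded_count_def by linarith
  moreover have "card W = card (W - {v,u}) + 1 + card (W \<inter> {u})"
  proof -
    have "W \<inter> {v,u} = insert v (W \<inter> {u})" "v \<notin> W \<inter> {u}"
      using assms(3,4) by auto
    then have "card (W \<inter> {v,u}) = card (W \<inter> {u}) + 1"
      by simp
    then show ?thesis
      using card_Int_Diff[OF assms(1), of "{v,u}"] by simp
  qed
  moreover have "{e\<in>E. v \<notin> e \<and> u \<notin> e} \<subseteq> E - {{v,u}}" "{v,u} \<in> E"
    using assms(5) by auto
  then have "card {e\<in>E. v \<notin> e \<and> u \<notin> e} < card E"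
    using card_Diff1_less[OF assms(2)] card_mono[OF _ \<open>_ \<subseteq> E - {{v,u}}\<close>] assms(2)
    by (meson finite_Diff order_le_less_trans)
  moreover have "card (W \<inter> {u}) \<le> 1"
    by (simp add: card_le_Suc0_iff_eq)
  ultimately show ?thesis
    using assms(6) by linarith
qed

text \<open>Induction on the number of loop vertices: a vertex of degree 0 goes into S, a vertex
  of degree at least 2 stays out, and a vertex of degree 1 goes in while its neighbour stays out;
  in each case the discarded count grows by at most a third of the deleted weight.\<close>
lemma exists_discarded_count_le_third:
  assumes "finite W" "finite E" "\<forall>e\<in>E. card e = 2"
  shows "\<exists>S. 3 * discarded_count W E S \<le> card W + card E"
  using assms
proof (induction "card W" arbitrary: W E rule: less_induct)
  case less
  show ?case
  proof (cases "W = {}")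
    case True
    have "{e\<in>E. e \<subseteq> {}} = {}"
      using less.prems(3) by auto
    then have "discarded_count W E {} = 0"
      unfolding discarded_count_def True by (simp only: Diff_empty card.empty)
    then show ?thesis
      by (intro exI[of _ "{}"]) simp
  next
    case False
    then obtain v where v: "v \<in> W"
      by blast
    have smaller: "card (W - {v}) < card W" "card (W - {v,u}) < card W" for u
      using card_Diff1_less[OF less.prems(1) v] v less.prems(1) by (auto intro!: psubset_card_mono)
    consider "card {e\<in>E. v \<in> e} = 0" | "card {e\<in>E. v \<in> e} = 1" | "card {e\<in>E. v \<in> e} \<ge> 2"
      by linarith
    then show ?thesis
    proof cases
      case 1
      then have "\<forall>e\<in>E. v \<notin> e"
        using less.prems(2) by auto
      obtain S where "3 * discarded_count (W - {v}) E S \<le> card (W - {v}) + card E"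
        using less.hyps[OF smaller(1)] less.prems by blast
      then show ?thesis
        using discarded_count_isolated_vertex[OF less.prems(1,2) v \<open>\<forall>e\<in>E. v \<notin> e\<close>] by blast
    next
      case 2
      then obtain e0 where e0: "{e\<in>E. v \<in> e} = {e0}"
        by (auto simp: card_Suc_eq)
      then have "card e0 = 2" "v \<in> e0"
        using less.prems(3) by auto
      then obtain u where "e0 = {v,u}" "u \<noteq> v"
        by (auto simp: card_2_iff)
      moreover obtain S where "3 * discarded_count (W - {v,u}) {e\<in>E. v \<notin> e \<and> u \<notin> e} S
          \<le> card (W - {v,u}) + card {e\<in>E. v \<notin> e \<and> u \<notin> e}"
        using less.hyps[OF smaller(2)[of u], of "{e\<in>E. v \<notin> e \<and> u \<notin> e}"] less.prems by auto
      ultimately show ?thesis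
        using discarded_count_pendant_vertex[OF less.prems(1,2) v] e0 by blast
    next
      case 3
      obtain S where "3 * discarded_count (W - {v}) {e\<in>E. v \<notin> e} S
          \<le> card (W - {v}) + card {e\<in>E. v \<notin> e}"
        using less.hyps[OF smaller(1), of "{e\<in>E. v \<notin> e}"] less.prems by auto
      then show ?thesis
        using discarded_count_high_degree_vertex[OF less.prems(1,2) v 3] by blast
    qed
  qed
qed

lemma finite_loop_vertices: "finite {v. {v} \<in># G}"
proof -
  have "(\<lambda>v. {v}) ` {v. {v} \<in># G} \<subseteq> set_mset G"
    by auto
  then have "finite ((\<lambda>v. {v}) ` {v. {v} \<in># G})"
    by (rule finite_subset) simp
  then show ?thesis
    by (rule finite_imageD) (simp add: inj_on_def)
qed

lemma card_loops_add_card_edges_le_size: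
  "card {v. {v} \<in># G} + card {e\<in>set_mset G. card e = 2} \<le> size G"
proof -
  have "card {v. {v} \<in># G} + card {e\<in>set_mset G. card e = 2}
      = card ((\<lambda>v. {v}) ` {v. {v} \<in># G} \<union> {e\<in>set_mset G. card e = 2})"
    using finite_loop_vertices[of G]
    by (subst card_Un_disjoint) (auto simp: card_image inj_on_def)
  also have "\<dots> \<le> card (set_mset G)"
    by (intro card_mono) auto
  also have "\<dots> \<le> size G"
    by (rule card_set_mset_le_size)
  finally show ?thesis .
qed

lemma size_discarded_le_discarded_count:
  assumes "is_simple G"
  shows "size (filter_mset (discarded S) G)
           \<le> discarded_count {v. {v} \<in># G} {e\<in>set_mset G. card e = 2} S"
proof -
  define W E where "W = {v. {v} \<in># G}" and "E = {e\<in>set_mset G. card e = 2}"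
  have "{e\<in>set_mset G. discarded S e} \<subseteq> (\<lambda>v. {v}) ` (W - S) \<union> {e\<in>E. e \<subseteq> S}"
  proof
    fix e
    assume "e \<in> {e\<in>set_mset G. discarded S e}"
    then have "e \<in># G" "discarded S e"
      by simp_all
    from this(2) show "e \<in> (\<lambda>v. {v}) ` (W - S) \<union> {e\<in>E. e \<subseteq> S}"
    proof (cases rule: discarded_cases)
      case (1 v)
      then have "v \<in> W - S"
        using \<open>e \<in># G\<close> by (simp add: W_def)
      then show ?thesis
        using 1 by (intro UnI1 image_eqI[of _ _ v]) simp_all
    next
      case (2 u v)
      then show ?thesis
        using \<open>e \<in># G\<close> by (intro UnI2) (simp add: E_def)
    qed
  qed
  then have "card {e\<in>set_mset G. discarded S e} \<le> card ((\<lambda>v. {v}) ` (W - S) \<union> {e\<in>E. e \<subseteq> S})"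
    using finite_loop_vertices[of G] by (intro card_mono) (auto simp: W_def E_def)
  also have "\<dots> \<le> card ((\<lambda>v. {v}) ` (W - S)) + card {e\<in>E. e \<subseteq> S}"
    by (rule card_Un_le)
  also have "\<dots> \<le> card (W - S) + card {e\<in>E. e \<subseteq> S}"
    using finite_loop_vertices[of G] by (simp add: W_def card_image_le)
  finally show ?thesis
    unfolding discarded_count_def W_def E_def
    using size_eq_card_set_mset_if_simple[OF is_simple_filter_mset[OF assms]] by simp
qed

lemma simple_size_le_ex_dumbbell:
  fixes G :: "'a set multiset"
  assumes "is_simple G"
  shows "2 * size G \<le> 3 * ex G dumbbell"
proof -
  have "finite {e\<in>set_mset G. card e = 2}" "\<forall>e\<in>{e\<in>set_mset G. card e = 2}. card e = 2"
    by simp_all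
  then obtain S where "3 * discarded_count {v. {v} \<in># G} {e\<in>set_mset G. card e = 2} S
      \<le> card {v. {v} \<in># G} + card {e\<in>set_mset G. card e = 2}"
    using exists_discarded_count_le_third[OF finite_loop_vertices] by blast
  then have "3 * size (filter_mset (discarded S) G) \<le> size G"
    using size_discarded_le_discarded_count[OF assms, of S] card_loops_add_card_edges_le_size[of G]
    by linarith
  then show ?thesis
    using size_dumbbell_free_part_add[of G S] size_dumbbell_free_part_le_ex[of S G] by linarith
qed

fun disjoint_dumbbells :: "nat \<Rightarrow> nat set multiset" where
  "disjoint_dumbbells 0 = {#}"
| "disjoint_dumbbells (Suc t) = disjoint_dumbbells t + {#{2*t, 2*t+1}, {2*t}, {2*t+1}#}"

lemma size_disjoint_dumbbells: "size (disjoint_dumbbells t) = 3 * t"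
  by (induction t) auto

lemma disjoint_dumbbells_below: "e \<in># disjoint_dumbbells t \<Longrightarrow> e \<subseteq> {..<2*t}"
  by (induction t) force+

lemma is_mhg_disjoint_dumbbells: "is_mhg (disjoint_dumbbells t)"
  by (induction t) (auto simp: is_mhg_def)

lemma is_simple_disjoint_dumbbells: "is_simple (disjoint_dumbbells t)"
  unfolding is_simple_def
proof (induction t)
  case 0
  then show ?case
    by simp
next
  case (Suc t)
  define D where "D = {#{2*t, 2*t+1}, {2*t}, {2*t+1}#}"
  show ?case
  proof
    fix e
    have "count (disjoint_dumbbells (Suc t)) e = count (disjoint_dumbbells t) e + count D e"
      by (simp add: D_def)
    moreover have "count (disjoint_dumbbells t) e = 0 \<and> count D e \<le> 1 \<or> count D e = 0"
    proof (cases "e \<in># D")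
      case True
      then have "e \<notin># disjoint_dumbbells t"
        using disjoint_dumbbells_below[of e t] by (auto simp: D_def)
      moreover have "count D e \<le> 1"
        unfolding D_def by (rule count_three_distinct_le) (auto simp: doubleton_eq_iff)
      ultimately show ?thesis
        by (simp add: not_in_iff)
    next
      case False
      then show ?thesis
        by (simp add: not_in_iff)
    qed
    ultimately show "count (disjoint_dumbbells (Suc t)) e \<le> 1"
      using Suc by (metis add.right_neutral add_0)
  qed
qed

lemma ex_disjoint_dumbbells: "ex (disjoint_dumbbells t) dumbbell \<le> 2 * t"
proof (induction t)
  case 0
  then show ?case
    using ex_dumbbell_le_size[of "{#}"] by simp
next
  case (Suc t)
  have "has_copy {#{2*t, 2*t+1}, {2*t}, {2*t+1}#} dumbbell"
    unfolding has_copy_dumbbell_iff by (rule exI[of _ "2*t"], rule exI[of _ "2*t+1"]) simp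
  then have "ex {#{2*t, 2*t+1}, {2*t}, {2*t+1}#} dumbbell < 3"
    using ex_less_size[OF no_dumbbell_in_empty] by (metis size_add_mset size_empty numeral_3_eq_3 One_nat_def)
  moreover have "ex (disjoint_dumbbells (Suc t)) dumbbell
      \<le> ex (disjoint_dumbbells t) dumbbell + ex {#{2*t, 2*t+1}, {2*t}, {2*t+1}#} dumbbell"
    unfolding disjoint_dumbbells.simps by (rule ex_add_le[OF no_dumbbell_in_empty])
  ultimately show ?case
    using Suc by (simp del: disjoint_dumbbells.simps)
qed

definition simple_extremal_graph :: "nat \<Rightarrow> nat set multiset" where
  "simple_extremal_graph k = disjoint_dumbbells ((k - 1) div 2)
     + replicate_mset ((k - 1) mod 2) {2 * ((k - 1) div 2)}"

lemma simple_extremal_graph_properties: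
  assumes "k \<ge> 1"
  shows "is_mhg (simple_extremal_graph k)" "is_simple (simple_extremal_graph k)"
    "size (simple_extremal_graph k) = 3 * (k - 1) div 2" "ex (simple_extremal_graph k) dumbbell < k"
proof -
  define t r where "t = (k - 1) div 2" and "r = (k - 1) mod 2"
  have G: "simple_extremal_graph k = disjoint_dumbbells t + replicate_mset r {2*t}"
    by (simp add: simple_extremal_graph_def t_def r_def)
  have "r \<le> 1" "k - 1 = 2 * t + r"
    by (simp_all add: t_def r_def)
  show "is_mhg (simple_extremal_graph k)"
    using is_mhg_disjoint_dumbbells[of t] by (auto simp: G is_mhg_def)
  have "{2*t} \<notin># disjoint_dumbbells t"
    using disjoint_dumbbells_below[of "{2*t}" t] by auto
  then have "count (disjoint_dumbbells t) {2*t} = 0"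
    by (simp add: not_in_iff)
  then show "is_simple (simple_extremal_graph k)"
    using is_simple_disjoint_dumbbells[of t] \<open>r \<le> 1\<close> by (auto simp: G is_simple_def)
  show "size (simple_extremal_graph k) = 3 * (k - 1) div 2"
    using \<open>r \<le> 1\<close> \<open>k - 1 = 2 * t + r\<close> by (simp add: G size_disjoint_dumbbells)
  have "ex (simple_extremal_graph k) dumbbell \<le> 2 * t + r"
    using ex_add_le[OF no_dumbbell_in_empty, of "disjoint_dumbbells t" "replicate_mset r {2*t}"]
      ex_disjoint_dumbbells[of t] ex_dumbbell_le_size[of "replicate_mset r {2*t}"]
    by (simp add: G)
  then show "ex (simple_extremal_graph k) dumbbell < k"
    using assms \<open>k - 1 = 2 * t + r\<close> by simp
qed

section \<open>Multi-hypergraphs\<close>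

definition golden_ratio :: real where
  "golden_ratio = (1 + sqrt 5) / 2"

lemma golden_ratio_square: "golden_ratio\<^sup>2 = golden_ratio + 1"
  by (simp add: golden_ratio_def power2_eq_square algebra_simps)

lemma golden_ratio_bounds: "3 / 2 \<le> golden_ratio" "golden_ratio \<le> 2"
proof -
  have "sqrt 4 \<le> sqrt (5::real)" "sqrt 5 \<le> sqrt (9::real)"
    by (simp_all only: real_sqrt_le_mono)
  moreover have "sqrt 4 = (2::real)" "sqrt 9 = (3::real)"
    by (simp_all add: real_sqrt_unique)
  ultimately have "2 \<le> sqrt (5::real)" "sqrt (5::real) \<le> 3"
    by simp_all
  then show "3 / 2 \<le> golden_ratio" "golden_ratio \<le> 2"
    by (simp_all add: golden_ratio_def)
qed

text \<open>The probability that a random subset of V, containing each vertex independently with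
  probability p, equals X.\<close>
definition subset_weight :: "real \<Rightarrow> 'a set \<Rightarrow> 'a set \<Rightarrow> real" where
  "subset_weight p V X = p ^ card X * (1 - p) ^ card (V - X)"

lemma sum_subset_weight_supersets:
  assumes "finite V" "A \<subseteq> V"
  shows "(\<Sum>X\<in>Pow V. if A \<subseteq> X then subset_weight p V X else 0) = p ^ card A"
proof -
  define q where "q x = (if x \<in> A then 0 else 1 - p)" for x
  have "(\<Sum>X\<in>Pow V. if A \<subseteq> X then subset_weight p V X else 0)
      = (\<Sum>X\<in>Pow V. (\<Prod>x\<in>X. p) * (\<Prod>x\<in>V - X. q x))"
  proof (rule sum.cong[OF refl])
    fix X
    assume X: "X \<in> Pow V"
    show "(if A \<subseteq> X then subset_weight p V X else 0) = (\<Prod>x\<in>X. p) * (\<Prod>x\<in>V - X. q x)"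
    proof (cases "A \<subseteq> X")
      case True
      then have "(\<Prod>x\<in>V - X. q x) = (\<Prod>x\<in>V - X. 1 - p)"
        by (intro prod.cong) (auto simp: q_def)
      then show ?thesis
        using True by (simp add: subset_weight_def)
    next
      case False
      then obtain a where "a \<in> A" "a \<notin> X"
        by blast
      then have "a \<in> V - X" "q a = 0"
        using assms(2) by (auto simp: q_def)
      then have "(\<Prod>x\<in>V - X. q x) = 0"
        using assms(1) by (meson finite_Diff prod_zero)
      then show ?thesis
        using False by simp
    qed
  qed
  also have "\<dots> = (\<Prod>x\<in>V. p + q x)"
    by (rule prod_add[OF assms(1), symmetric])
  also have "\<dots> = (\<Prod>x\<in>V. if x \<in> A then p else 1)"
    by (rule prod.cong) (auto simp: q_def)
  also have "\<dots> = p ^ card A"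
    using assms by (simp add: prod.If_cases Int_absorb1)
  finally show ?thesis .
qed

lemma sum_subset_weight: "finite V \<Longrightarrow> (\<Sum>X\<in>Pow V. subset_weight p V X) = 1"
  using sum_subset_weight_supersets[of V "{}" p] by simp

lemma subset_weight_nonneg: "0 \<le> p \<Longrightarrow> p \<le> 1 \<Longrightarrow> 0 \<le> subset_weight p V X"
  by (simp add: subset_weight_def)

lemma exists_le_weighted_average:
  fixes f :: "'a set \<Rightarrow> real"
  assumes "finite V" "0 \<le> p" "p \<le> 1"
  shows "\<exists>X. f X \<le> (\<Sum>X\<in>Pow V. subset_weight p V X * f X)"
proof -
  have fin: "finite (f ` Pow V)"
    using assms(1) by simp
  then have "Min (f ` Pow V) \<in> f ` Pow V"
    by (intro Min_in) auto
  then obtain X0 where X0: "X0 \<in> Pow V" "f X0 = Min (f ` Pow V)"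
    by (metis imageE)
  then have "\<forall>X\<in>Pow V. f X0 \<le> f X"
    using fin by simp
  have "f X0 = (\<Sum>X\<in>Pow V. subset_weight p V X * f X0)"
    using sum_subset_weight[OF assms(1), of p] by (simp add: sum_distrib_right[symmetric])
  also have "\<dots> \<le> (\<Sum>X\<in>Pow V. subset_weight p V X * f X)"
    using \<open>\<forall>X\<in>Pow V. f X0 \<le> f X\<close> subset_weight_nonneg[OF assms(2,3)] by (intro sum_mono mult_left_mono) auto
  finally show ?thesis
    by blast
qed

lemma weighted_sum_discarded_edge:
  assumes "finite V" "e \<subseteq> V"
  shows "(\<Sum>X\<in>Pow V. subset_weight p V X * (if discarded X e then 1 else 0))
           = (if card e = 1 then 1 - p else if card e = 2 then p\<^sup>2 else 0)"
proof -
  consider "card e = 1" | "card e = 2" | "card e \<noteq> 1" "card e \<noteq> 2"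
    by blast
  then show ?thesis
  proof cases
    case 1
    have "(\<Sum>X\<in>Pow V. subset_weight p V X * (if discarded X e then 1 else 0))
        = (\<Sum>X\<in>Pow V. subset_weight p V X - (if e \<subseteq> X then subset_weight p V X else 0))"
      using 1 by (intro sum.cong) (auto simp: discarded_def)
    also have "\<dots> = 1 - p"
      using 1 assms sum_subset_weight[OF assms(1), of p] sum_subset_weight_supersets[OF assms, of p]
      by (simp add: sum_subtractf)
    finally show ?thesis
      using 1 by simp
  next
    case 2
    have "(\<Sum>X\<in>Pow V. subset_weight p V X * (if discarded X e then 1 else 0))
        = (\<Sum>X\<in>Pow V. if e \<subseteq> X then subset_weight p V X else 0)"
      using 2 by (intro sum.cong) (auto simp: discarded_def)
    also have "\<dots> = p\<^sup>2"
      using 2 sum_subset_weight_supersets[OF assms, of p] by simp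
    finally show ?thesis
      using 2 by simp
  next
    case 3
    then show ?thesis
      by (simp add: discarded_def)
  qed
qed

lemma weighted_sum_discarded:
  assumes "finite V" "\<forall>e\<in>#G. e \<subseteq> V"
  shows "(\<Sum>X\<in>Pow V. subset_weight p V X * real (size (filter_mset (discarded X) G)))
           = (1 - p) * real (size (filter_mset (\<lambda>e. card e = 1) G))
             + p\<^sup>2 * real (size (filter_mset (\<lambda>e. card e = 2) G))"
  using assms(2)
proof (induction G)
  case empty
  then show ?case
    by simp
next
  case (add e G)
  have "(\<Sum>X\<in>Pow V. subset_weight p V X * real (size (filter_mset (discarded X) (add_mset e G))))
      = (\<Sum>X\<in>Pow V. subset_weight p V X * real (size (filter_mset (discarded X) G))
          + subset_weight p V X * (if discarded X e then 1 else 0))"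
    by (intro sum.cong) (auto simp: algebra_simps)
  also have "\<dots> = (\<Sum>X\<in>Pow V. subset_weight p V X * real (size (filter_mset (discarded X) G)))
        + (\<Sum>X\<in>Pow V. subset_weight p V X * (if discarded X e then 1 else 0))"
    by (rule sum.distrib)
  finally show ?case
    using add weighted_sum_discarded_edge[OF assms(1), of e p] by (simp add: algebra_simps)
qed

lemma size_le_golden_ratio_ex_dumbbell:
  fixes G :: "'a set multiset"
  assumes "is_mhg G"
  shows "real (size G) \<le> golden_ratio * real (ex G dumbbell)"
proof -
  define p where "p = golden_ratio - 1"
  have p: "0 \<le> p" "p \<le> 1" "1 - p = 2 - golden_ratio" "p\<^sup>2 = 2 - golden_ratio"
    using golden_ratio_bounds golden_ratio_square by (simp_all add: p_def power2_eq_square algebra_simps)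
  define V where "V = hverts G"
  have "finite V"
    using assms by (auto simp: V_def hverts_def is_mhg_def)
  have "\<forall>e\<in>#G. e \<subseteq> V"
    by (auto simp: V_def hverts_def)
  define L M where "L = size (filter_mset (\<lambda>e. card e = 1) G)" and "M = size (filter_mset (\<lambda>e. card e = 2) G)"
  have "L + M \<le> size G"
    unfolding L_def M_def by (rule size_filter_mset_disjoint_le) simp
  obtain X where "real (size (filter_mset (discarded X) G))
      \<le> (\<Sum>X\<in>Pow V. subset_weight p V X * real (size (filter_mset (discarded X) G)))"
    using exists_le_weighted_average[OF \<open>finite V\<close> p(1,2),
        of "\<lambda>X. real (size (filter_mset (discarded X) G))"] by blast
  also have "\<dots> = (2 - golden_ratio) * (real L + real M)"
    unfolding weighted_sum_discarded[OF \<open>finite V\<close> \<open>\<forall>e\<in>#G. e \<subseteq> V\<close>] L_def M_def p(3,4)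
    by (simp add: algebra_simps)
  also have "\<dots> \<le> (2 - golden_ratio) * real (size G)"
    using \<open>L + M \<le> size G\<close> golden_ratio_bounds by (intro mult_left_mono) auto
  finally have "(golden_ratio - 1) * real (size G) \<le> real (ex G dumbbell)"
    using size_dumbbell_free_part_add[of G X] size_dumbbell_free_part_le_ex[of X G]
    by (simp add: algebra_simps)
  then have "golden_ratio * ((golden_ratio - 1) * real (size G)) \<le> golden_ratio * real (ex G dumbbell)"
    using golden_ratio_bounds by (intro mult_left_mono) auto
  moreover have "golden_ratio * (golden_ratio - 1) = 1"
    using golden_ratio_square by (simp add: power2_eq_square algebra_simps)
  ultimately show ?thesis
    by (simp add: mult.assoc[symmetric])
qed

lemma two_mult_choose_two: "2 * (n choose 2) = n * (n - 1)"
proof -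
  have "even (n * (n - 1))"
    by auto
  then show ?thesis
    by (simp add: choose_two)
qed

lemma real_choose_two: "2 * real (n choose 2) = real n * real n - real n"
proof -
  have "real (2 * (n choose 2)) = real (n * (n - 1))"
    by (simp only: two_mult_choose_two)
  then show ?thesis
    by (cases n) (auto simp: algebra_simps)
qed

lemma mult_le_choose_two_add: "j * s \<le> (s choose 2) + ((j + 1) choose 2)"
proof -
  have "0 \<le> (int s - int j) * (int s - int j - 1)"
    by (cases "int s \<le> int j") (auto intro: mult_nonpos_nonpos)
  then have "int (2 * (j * s)) \<le> int (s * (s - 1) + (j + 1) * j)"
    by (cases s) (simp_all add: algebra_simps)
  then have "2 * (j * s) \<le> s * (s - 1) + (j + 1) * j"
    by (simp only: of_nat_le_iff)
  then have "2 * (j * s) \<le> 2 * (s choose 2) + 2 * ((j + 1) choose 2)"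
    unfolding two_mult_choose_two by simp
  then show ?thesis
    by simp
qed

definition looped_complete_graph :: "nat \<Rightarrow> nat \<Rightarrow> nat set multiset" where
  "looped_complete_graph j n = repeat_mset j (image_mset (\<lambda>i. {i}) (mset_set {..<n}))
     + mset_set {e. e \<subseteq> {..<n} \<and> card e = 2}"

lemma finite_two_subsets: "finite {e. e \<subseteq> {..<n::nat} \<and> card e = 2}"
  by (rule finite_subset[of _ "Pow {..<n}"]) auto

lemma is_mhg_looped_complete_graph: "is_mhg (looped_complete_graph j n)"
  unfolding is_mhg_def looped_complete_graph_def using finite_two_subsets[of n]
  by (auto dest!: in_repeat_msetD dest: finite_subset[OF _ finite_lessThan])

lemma size_looped_complete_graph: "size (looped_complete_graph j n) = j * n + (n choose 2)"
  unfolding looped_complete_graph_def using finite_two_subsets[of n] n_subsets[of "{..<n}" 2]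
  by simp

lemma size_dumbbell_free_part_loops:
  fixes n :: nat
  shows "size (dumbbell_free_part S (image_mset (\<lambda>i. {i}) (mset_set {..<n}))) = card (S \<inter> {..<n})"
proof -
  have "{i. i < n \<and> i \<in> S} = S \<inter> {..<n}"
    by auto
  then have "dumbbell_free_part S (image_mset (\<lambda>i. {i}) (mset_set {..<n}))
      = image_mset (\<lambda>i. {i}) (mset_set (S \<inter> {..<n}))"
    unfolding dumbbell_free_part_def image_mset_filter_mset_swap[symmetric] by simp
  then show ?thesis
    by simp
qed

lemma size_dumbbell_free_part_two_subsets:
  fixes n :: nat
  shows "size (dumbbell_free_part S (mset_set {e. e \<subseteq> {..<n} \<and> card e = 2}))
     + (card (S \<inter> {..<n}) choose 2) = n choose 2"
proof -
  define P where "P = {e. e \<subseteq> {..<n::nat} \<and> card e = 2}"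
  have "finite P"
    using finite_two_subsets[of n] by (simp add: P_def)
  have "dumbbell_free_part S (mset_set P) = mset_set {e\<in>P. \<not> e \<subseteq> S}"
    unfolding dumbbell_free_part_def using \<open>finite P\<close> by (auto simp: P_def discarded_def)
  moreover have "card {e\<in>P. \<not> e \<subseteq> S} + card {e\<in>P. e \<subseteq> S} = card P"
  proof -
    have "card ({e\<in>P. \<not> e \<subseteq> S} \<union> {e\<in>P. e \<subseteq> S}) = card {e\<in>P. \<not> e \<subseteq> S} + card {e\<in>P. e \<subseteq> S}"
      using \<open>finite P\<close> by (intro card_Un_disjoint) auto
    moreover have "{e\<in>P. \<not> e \<subseteq> S} \<union> {e\<in>P. e \<subseteq> S} = P"
      by auto
    ultimately show ?thesis
      by simp
  qed
  moreover have "{e\<in>P. e \<subseteq> S} = {e. e \<subseteq> S \<inter> {..<n} \<and> card e = 2}"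
    by (auto simp: P_def)
  moreover have "card {e. e \<subseteq> S \<inter> {..<n} \<and> card e = 2} = card (S \<inter> {..<n}) choose 2"
    by (rule n_subsets) simp
  moreover have "card P = n choose 2"
    using n_subsets[of "{..<n}" 2] by (simp add: P_def)
  ultimately show ?thesis
    by (simp add: P_def)
qed

lemma ex_looped_complete_graph:
  "ex (looped_complete_graph j n) dumbbell \<le> (n choose 2) + ((j + 1) choose 2)"
proof (rule ex_dumbbell_le)
  fix S
  have "size (dumbbell_free_part S (looped_complete_graph j n))
      = j * card (S \<inter> {..<n})
        + size (dumbbell_free_part S (mset_set {e. e \<subseteq> {..<n} \<and> card e = 2}))"
    using size_dumbbell_free_part_loops[of S n]
    by (simp add: looped_complete_graph_def dumbbell_free_part_def filter_mset_repeat_mset)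
  then show "size (dumbbell_free_part S (looped_complete_graph j n)) \<le> (n choose 2) + ((j + 1) choose 2)"
    using size_dumbbell_free_part_two_subsets[of S n] mult_le_choose_two_add[of j "card (S \<inter> {..<n})"]
    by linarith
qed

text \<open>The left-hand side equals \<open>(\<phi> - 1) (N - \<phi> J)\<^sup>2 + (1 - \<phi>) N + \<phi> J\<close>,
  because \<open>\<phi>\<^sup>2 = \<phi> + 1\<close>.\<close>
lemma golden_ratio_floor_estimate:
  fixes N J :: real
  assumes "N \<le> golden_ratio * J" "golden_ratio * J - 1 < N" "0 \<le> N" "1 \<le> J"
  shows "golden_ratio * (N * N - N + (J + 1) * J) - (2 * J * N + N * N - N) \<le> 3 * J"
proof -
  have "\<bar>N - golden_ratio * J\<bar> \<le> 1"
    using assms(1,2) by auto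
  then have "\<bar>N - golden_ratio * J\<bar>\<^sup>2 \<le> 1\<^sup>2"
    by (intro power_mono) auto
  then have "(N - golden_ratio * J)\<^sup>2 \<le> 1"
    by simp
  then have "(golden_ratio - 1) * (N - golden_ratio * J)\<^sup>2 \<le> golden_ratio - 1"
    using golden_ratio_bounds mult_left_mono[of _ 1 "golden_ratio - 1"] by simp
  moreover have "(1 - golden_ratio) * N \<le> 0"
    using golden_ratio_bounds assms(3) by (simp add: mult_nonpos_nonneg)
  moreover have "golden_ratio * J \<le> 2 * J"
    using golden_ratio_bounds assms(4) by (intro mult_right_mono) auto
  moreover have "golden_ratio * (N * N - N + (J + 1) * J) - (2 * J * N + N * N - N)
      = (golden_ratio - 1) * (N - golden_ratio * J)\<^sup>2 + (1 - golden_ratio) * N + golden_ratio * J"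
    using golden_ratio_square unfolding power2_eq_square by algebra
  ultimately show ?thesis
    using golden_ratio_bounds assms(4) by linarith
qed

lemma golden_ratio_le_choose_ratio:
  fixes j :: nat
  assumes j: "j \<ge> 1"
  defines "n \<equiv> nat \<lfloor>golden_ratio * real j\<rfloor>"
  defines "x \<equiv> (n choose 2) + ((j + 1) choose 2)" and "y \<equiv> j * n + (n choose 2)"
  shows "0 < x" "golden_ratio - 3 / real j \<le> real y / real x"
proof -
  define N J where "N = real n" and "J = real j"
  have J: "1 \<le> J"
    using j by (simp add: J_def)
  have "0 \<le> golden_ratio * J"
    using golden_ratio_bounds J by simp
  then have N: "N = of_int \<lfloor>golden_ratio * J\<rfloor>"
    by (simp add: N_def n_def J_def)
  have "N \<le> golden_ratio * J" "golden_ratio * J - 1 < N" "0 \<le> N"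
    unfolding N by (simp_all add: \<open>0 \<le> golden_ratio * J\<close>)
  have x2: "2 * real x = N * N - N + (J + 1) * J"
    using real_choose_two[of n] real_choose_two[of "j + 1"]
    by (simp add: x_def N_def J_def algebra_simps)
  have y2: "2 * real y = 2 * J * N + N * N - N"
    using real_choose_two[of n] by (simp add: y_def N_def J_def algebra_simps)
  have "0 \<le> N * N - N"
    using real_choose_two[of n] by (simp add: N_def)
  then have x_ge: "J * J \<le> 2 * real x"
    using x2 J by (simp add: algebra_simps)
  moreover have "1 \<le> J * J"
    using J mult_mono[of 1 J 1 J] by simp
  ultimately show "0 < x"
    by simp
  have "golden_ratio - real y / real x = (golden_ratio * (2 * real x) - 2 * real y) / (2 * real x)"
    using \<open>0 < x\<close> by (simp add: field_simps)
  also have "\<dots> \<le> 3 * J / (2 * real x)"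
    using golden_ratio_floor_estimate[OF \<open>N \<le> _\<close> \<open>_ < N\<close> \<open>0 \<le> N\<close>] J x2 y2
    by (intro divide_right_mono) auto
  also have "\<dots> \<le> 3 * J / (J * J)"
    using x_ge J \<open>0 < x\<close> by (intro divide_left_mono) auto
  also have "\<dots> = 3 / real j"
    using J by (simp add: J_def field_simps)
  finally show "golden_ratio - 3 / real j \<le> real y / real x"
    by simp
qed

lemma real_div_nat_ge:
  assumes "0 < x"
  shows "real m / real x - 1 \<le> real (m div x)"
proof -
  have "m < m div x * x + x"
    using mod_less_divisor[OF assms, of m] div_mult_mod_eq[of m x] by linarith
  then have "real m < real (m div x) * real x + real x"
    by (metis of_nat_add of_nat_less_iff of_nat_mult)
  then show ?thesis
    using assms by (simp add: field_simps)
qed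

lemma ratio_tendsto_of_bounds:
  fixes a :: "nat \<Rightarrow> real" and L :: real
  assumes upper: "\<And>k. k \<ge> 1 \<Longrightarrow> a k \<le> L * real k"
    and lower: "\<And>b. b < L \<Longrightarrow>
      \<exists>x y. 0 < x \<and> b < real y / real x \<and> (\<forall>k\<ge>1. real ((k - 1) div x * y) \<le> a k)"
  shows "(\<lambda>k. a k / real k) \<longlonglongrightarrow> L"
proof (rule order_tendstoI)
  fix b
  assume "b < L"
  then obtain x y where x: "0 < x" and b: "b < real y / real x"
    and low: "\<forall>k\<ge>1. real ((k - 1) div x * y) \<le> a k"
    using lower by blast
  define g where "g k = real y / real x - real y * (1 + real x) / (real x * real k)" for k
  have "g \<longlonglongrightarrow> real y / real x - 0"
    unfolding g_def using lim_const_over_n[of "real y * (1 + real x) / real x"]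
    by (intro tendsto_diff tendsto_const) (simp add: field_simps)
  then have "\<forall>\<^sub>F k in sequentially. b < g k"
    using b by (simp add: order_tendstoD(1))
  moreover have "g k \<le> a k / real k" if "k \<ge> 1" for k
  proof -
    have "real y * (real (k - 1) / real x - 1) \<le> real y * real ((k - 1) div x)"
      using real_div_nat_ge[OF x] by (rule mult_left_mono) simp
    also have "\<dots> \<le> a k"
      using low that by (simp add: mult.commute)
    finally have "real y * (real (k - 1) / real x - 1) / real k \<le> a k / real k"
      by (rule divide_right_mono) simp
    moreover have "g k = real y * (real (k - 1) / real x - 1) / real k"
      using that x by (simp add: g_def of_nat_diff field_simps)
    ultimately show ?thesis
      by simp
  qed
  then have "\<forall>\<^sub>F k in sequentially. g k \<le> a k / real k"
    unfolding eventually_sequentially by blast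
  ultimately show "\<forall>\<^sub>F k in sequentially. b < a k / real k"
    by eventually_elim (rule less_le_trans)
next
  fix b
  assume "L < b"
  have "a k / real k < b" if "k \<ge> 1" for k
  proof -
    have "L * real k < b * real k"
      using \<open>L < b\<close> that by (intro mult_strict_right_mono) auto
    then have "a k < b * real k"
      using upper[OF that] by linarith
    then show ?thesis
      using that by (simp add: divide_less_eq)
  qed
  then show "\<forall>\<^sub>F k in sequentially. a k / real k < b"
    unfolding eventually_sequentially by blast
qed

lemma EH_le:
  assumes "\<And>G :: nat set multiset. is_mhg G \<Longrightarrow> is_simple G \<Longrightarrow> ex G H < k \<Longrightarrow> size G \<le> B"
  shows "EH H k \<le> enat B"
  unfolding EH_def using assms by (intro Sup_least) auto

lemma le_EH:
  fixes G :: "nat set multiset"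
  assumes "is_mhg G" "is_simple G" "ex G H < k"
  shows "enat (size G) \<le> EH H k"
  unfolding EH_def using assms by (intro Sup_upper imageI) simp

lemma EHstar_le:
  assumes "\<And>G :: nat set multiset. is_mhg G \<Longrightarrow> ex G H < k \<Longrightarrow> size G \<le> B"
  shows "EHstar H k \<le> enat B"
  unfolding EHstar_def using assms by (intro Sup_least) auto

lemma le_EHstar:
  fixes G :: "nat set multiset"
  assumes "is_mhg G" "ex G H < k"
  shows "enat (size G) \<le> EHstar H k"
  unfolding EHstar_def using assms by (intro Sup_upper imageI) simp

lemma EH_dumbbell:
  assumes "k \<ge> 1"
  shows "EH dumbbell k = enat (3 * (k - 1) div 2)"
proof (rule antisym)
  show "EH dumbbell k \<le> enat (3 * (k - 1) div 2)"
  proof (rule EH_le)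
    fix G :: "nat set multiset"
    assume "is_simple G" "ex G dumbbell < k"
    then have "2 * size G \<le> 3 * (k - 1)"
      using simple_size_le_ex_dumbbell[of G] by linarith
    then show "size G \<le> 3 * (k - 1) div 2"
      by presburger
  qed
  show "enat (3 * (k - 1) div 2) \<le> EH dumbbell k"
    using le_EH[OF simple_extremal_graph_properties(1,2,4)[OF assms]]
      simple_extremal_graph_properties(3)[OF assms]
    by simp
qed

lemma EHstar_dumbbell_le:
  assumes "k \<ge> 1"
  shows "EHstar dumbbell k \<noteq> \<infinity>" "real (the_enat (EHstar dumbbell k)) \<le> golden_ratio * real k"
proof -
  have "EHstar dumbbell k \<le> enat (nat \<lfloor>golden_ratio * (real k - 1)\<rfloor>)"
  proof (rule EHstar_le)
    fix G :: "nat set multiset"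
    assume "is_mhg G" "ex G dumbbell < k"
    then have "real (ex G dumbbell) \<le> real k - 1"
      by linarith
    then have "golden_ratio * real (ex G dumbbell) \<le> golden_ratio * (real k - 1)"
      using golden_ratio_bounds by (intro mult_left_mono) auto
    then have "real (size G) \<le> golden_ratio * (real k - 1)"
      using size_le_golden_ratio_ex_dumbbell[OF \<open>is_mhg G\<close>] by linarith
    then show "size G \<le> nat \<lfloor>golden_ratio * (real k - 1)\<rfloor>"
      by linarith
  qed
  then obtain N where N: "EHstar dumbbell k = enat N" "N \<le> nat \<lfloor>golden_ratio * (real k - 1)\<rfloor>"
    by (metis enat_ile enat_ord_simps(1))
  then show "EHstar dumbbell k \<noteq> \<infinity>"
    by simp
  have "0 \<le> golden_ratio * (real k - 1)"
    using assms golden_ratio_bounds by simp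
  have "real N \<le> real (nat \<lfloor>golden_ratio * (real k - 1)\<rfloor>)"
    using N(2) by (simp only: of_nat_le_iff)
  also have "\<dots> = of_int \<lfloor>golden_ratio * (real k - 1)\<rfloor>"
    using \<open>0 \<le> golden_ratio * (real k - 1)\<close> by simp
  also have "\<dots> \<le> golden_ratio * (real k - 1)"
    by simp
  also have "\<dots> \<le> golden_ratio * real k"
    using golden_ratio_bounds by (simp add: algebra_simps)
  finally show "real (the_enat (EHstar dumbbell k)) \<le> golden_ratio * real k"
    using N(1) by simp
qed

lemma EHstar_dumbbell_ge:
  assumes "k \<ge> 1"
  shows "real ((k - 1) div ((n choose 2) + ((j + 1) choose 2)) * (j * n + (n choose 2)))
           \<le> real (the_enat (EHstar dumbbell k))"
proof -
  define c where "c = (k - 1) div ((n choose 2) + ((j + 1) choose 2))"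
  define G where "G = repeat_mset c (looped_complete_graph j n)"
  have "ex G dumbbell \<le> c * ((n choose 2) + ((j + 1) choose 2))"
    using ex_repeat_le[OF no_dumbbell_in_empty, of c] ex_looped_complete_graph[of j n]
    unfolding G_def by (meson le_trans mult_le_mono2)
  also have "\<dots> \<le> k - 1"
    by (simp add: c_def)
  finally have "enat (size G) \<le> EHstar dumbbell k"
    using assms is_mhg_repeat_mset[OF is_mhg_looped_complete_graph] unfolding G_def
    by (intro le_EHstar) auto
  moreover obtain N where N: "EHstar dumbbell k = enat N"
    using EHstar_dumbbell_le(1)[OF assms] by auto
  ultimately have "size G \<le> N"
    by simp
  moreover have "size G = c * (j * n + (n choose 2))"
    by (simp add: G_def size_looped_complete_graph)
  ultimately show ?thesis
    unfolding N c_def the_enat.simps of_nat_le_iff by simp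
qed

lemma EHstar_dumbbell_slopes:
  assumes "b < golden_ratio"
  shows "\<exists>x y. 0 < x \<and> b < real y / real x
           \<and> (\<forall>k\<ge>1. real ((k - 1) div x * y) \<le> real (the_enat (EHstar dumbbell k)))"
proof -
  obtain j :: nat where j: "3 / (golden_ratio - b) < real j"
    using reals_Archimedean2 by blast
  moreover have "0 < 3 / (golden_ratio - b)"
    using assms by simp
  ultimately have "0 < real j"
    by linarith
  then have "1 \<le> j"
    by simp
  have "3 < real j * (golden_ratio - b)"
    using j assms by (simp add: pos_divide_less_eq)
  then have "3 / real j < golden_ratio - b"
    using \<open>0 < real j\<close> by (simp add: divide_less_eq mult.commute)
  define n where "n = nat \<lfloor>golden_ratio * real j\<rfloor>"
  define x y where "x = (n choose 2) + ((j + 1) choose 2)" and "y = j * n + (n choose 2)"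
  have "0 < x" "golden_ratio - 3 / real j \<le> real y / real x"
    using golden_ratio_le_choose_ratio[OF \<open>1 \<le> j\<close>] unfolding x_def y_def n_def by simp_all
  moreover have "\<forall>k\<ge>1. real ((k - 1) div x * y) \<le> real (the_enat (EHstar dumbbell k))"
    unfolding x_def y_def using EHstar_dumbbell_ge by blast
  ultimately show ?thesis
    using \<open>3 / real j < golden_ratio - b\<close> by (intro exI[of _ x] exI[of _ y]) auto
qed

theorem theorem1p5:
  shows "(\<forall>k::nat. k \<ge> 1 \<longrightarrow> EH dumbbell k = enat ((3 * (k - 1)) div 2))
       \<and> (\<forall>\<^sub>F k in sequentially. EHstar dumbbell k \<noteq> \<infinity>)
       \<and> ((\<lambda>k. real (the_enat (EHstar dumbbell k)) / real k)
            \<longlonglongrightarrow> (1 + sqrt 5) / 2)"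
proof (intro conjI)
  show "\<forall>k::nat. k \<ge> 1 \<longrightarrow> EH dumbbell k = enat ((3 * (k - 1)) div 2)"
    using EH_dumbbell by blast
  show "\<forall>\<^sub>F k in sequentially. EHstar dumbbell k \<noteq> \<infinity>"
    unfolding eventually_sequentially using EHstar_dumbbell_le(1) by blast
  have "(\<lambda>k. real (the_enat (EHstar dumbbell k)) / real k) \<longlonglongrightarrow> golden_ratio"
    using EHstar_dumbbell_le(2) EHstar_dumbbell_slopes by (rule ratio_tendsto_of_bounds)
  then show "(\<lambda>k. real (the_enat (EHstar dumbbell k)) / real k) \<longlonglongrightarrow> (1 + sqrt 5) / 2"
    by (simp add: golden_ratio_def)
qed

end
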